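(* Let $P_n$ be a labeled path with ad-pattern $w=w_1\cdots w_{n-1}$ and ribbon composition $\alpha=(\alpha_1,\dots,\alpha_\ell)$. Suppose that (1) $w$ does not contain $ddaa$ as a factor, $w$ does not begin with $daa$, and $w$ does not end with $dda$ (i.e. $RT(P_n)$ contains no $(1,1,3)$ sub-ribbon, does not begin with a $(1,3)$ sub-ribbon, and does not end with a $(1,1,2)$ sub-ribbon); and (2) $RT(P_n)$ is regular, i.e. there is an index $j<\ell$ with $\alpha_j=2$ and either $\alpha_{j+1}\ge 2$, or $j+1=\ell$ and $\alpha_{\ell}=1$. Then $X(P_n;\mathbf{x},q)$ is not symmetric.
   Context: A labeled path $P_n$ is the path graph with vertices $v_1,\dots,v_n$ (edges $v_iv_{i+1}$) where $v_i$ carries label $\sigma_i$ for a permutation $\sigma$ of $[n]$; vertices are identified with labels. A proper coloring is $c\colon[n]\to\{1,2,\dots\}$ with adjacent vertices colored differently; $\operatorname{asc}(c)=\#\{ij\in E: i<j,\ c(i)<c(j)\}$. The CQF is $X(P_n;\mathbf{x},q)=\sum_{c \text{ proper}} x_{c(1)}\cdots x_{c(n)}q^{\operatorname{asc}(c)}$; it is symmetric if each coefficient of $q^k$ is a symmetric function. The ad-pattern of $P_n$ is $w_1\cdots w_{n-1}$ with $w_i=a$ if $\sigma_i<\sigma_{i+1}$ and $w_i=d$ otherwise. The ribbon diagram $RT(P_n)$: start with box $1$, and for $i=1,\dots,n-1$ place box $i+1$ immediately right of box $i$ if $w_i=a$ and immediately above box $i$ if $w_i=d$. Its composition $(\alpha_1,\dots,\alpha_\ell)$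 lists the number of boxes in each row, from the bottom row up. A $\beta$ sub-ribbon is a set of consecutive boxes whose shape is the ribbon with row lengths $\beta$. *)

theory Defs
  imports Main "HOL-Library.FuncSet" "HOL-Library.Sublist"
begin

text \<open>A labeled path P_n is given by the list sigma = [sigma_1,...,sigma_n], a permutation
  of [n]; vertex v_i carries label sigma_i, and vertices are identified with labels.\<close>

definition is_labeled_path :: "nat list \<Rightarrow> bool" where
  "is_labeled_path \<sigma> \<longleftrightarrow> distinct \<sigma> \<and> set \<sigma> = {1..length \<sigma>}"

definition path_edges :: "nat list \<Rightarrow> (nat \<times> nat) set" where
  "path_edges \<sigma> = {(min (\<sigma> ! i) (\<sigma> ! Suc i), max (\<sigma> ! i) (\<sigma> ! Suc i)) | i. Suc i < length \<sigma>}"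

definition proper_coloring :: "nat list \<Rightarrow> (nat \<Rightarrow> nat) \<Rightarrow> bool" where
  "proper_coloring \<sigma> c \<longleftrightarrow> (\<forall>(i,j)\<in>path_edges \<sigma>. c i \<noteq> c j)"

definition asc :: "nat list \<Rightarrow> (nat \<Rightarrow> nat) \<Rightarrow> nat" where
  "asc \<sigma> c = card {(i,j) \<in> path_edges \<sigma>. c i < c j}"

text \<open>Coefficient of q^k x^a in X(P_n; x, q), where the exponent vector a : nat => nat
  assigns to each color i >= 1 the exponent of x_i.\<close>
definition cqf_coeff :: "nat list \<Rightarrow> nat \<Rightarrow> (nat \<Rightarrow> nat) \<Rightarrow> nat" where
  "cqf_coeff \<sigma> k a = card {c. c \<in> {1..length \<sigma>} \<rightarrow>\<^sub>E {1..} \<and> proper_coloring \<sigma> c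
       \<and> asc \<sigma> c = k \<and> (\<forall>i. card {v \<in> {1..length \<sigma>}. c v = i} = a i)}"

text \<open>X is symmetric iff each coefficient of q^k is a symmetric function, i.e. invariant
  under every permutation of the variables x_1, x_2, ... (permutations of the positive integers).\<close>
definition cqf_symmetric :: "nat list \<Rightarrow> bool" where
  "cqf_symmetric \<sigma> \<longleftrightarrow>
     (\<forall>k a \<pi>. bij \<pi> \<and> \<pi> 0 = 0 \<longrightarrow> cqf_coeff \<sigma> k (a \<circ> \<pi>) = cqf_coeff \<sigma> k a)"

datatype ad = A | D

definition ad_pattern :: "nat list \<Rightarrow> ad list" where
  "ad_pattern \<sigma> = map (\<lambda>i. if \<sigma> ! i < \<sigma> ! Suc i then A else D) [0..<length \<sigma> - 1]"

text \<open>Composition of the ribbon diagram RT(P_n): row lengths from bottom row up.\<close>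
fun ribbon_comp :: "ad list \<Rightarrow> nat list" where
  "ribbon_comp [] = [1]"
| "ribbon_comp (A # w) = (let r = ribbon_comp w in Suc (hd r) # tl r)"
| "ribbon_comp (D # w) = 1 # ribbon_comp w"

definition regular_ribbon :: "nat list \<Rightarrow> bool" where
  "regular_ribbon \<alpha> \<longleftrightarrow> (\<exists>j. Suc j < length \<alpha> \<and> \<alpha> ! j = 2 \<and>
      (\<alpha> ! Suc j \<ge> 2 \<or> (Suc (Suc j) = length \<alpha> \<and> \<alpha> ! Suc j = 1)))"

end

theory Submission
  imports Defs
begin

(*
  A regular ribbon has a row of length 2, i.e. an isolated ascent of the ad-pattern, so the
  up/down word of the path changes direction at some step q.

  Read a coloring as its color sequence along the path and compare the coefficients of
  x1^a x2^b x3 and x1 x2^a x3^b (a = ceil(n/2), b = floor(n/2) - 1), which a cyclic permutation of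
  x1, x2, x3 exchanges. For the first monomial, color 1 fills a maximum independent set of the
  path, a "stair" (even positions up to some point, odd ones after it), so every step but at most
  one touches a 1 and the ascent count is almost determined. For the second monomial, the
  coloring with 2s alternating and its single 1 at q differs from an alternating rise pattern in
  two consecutive steps on which the word changes direction, so its ascent count k is off by 2.
  For odd n no coloring of the first kind has k ascents; for even n, matching rise patterns
  injects those that do into colorings of the second kind, missing the one above.
*)

section \<open>Direction changes of a regular ribbon\<close>

definition isolated_ascent :: "ad list \<Rightarrow> nat \<Rightarrow> bool" where
  "isolated_ascent w j \<longleftrightarrow> j < length w \<and> w!j = A \<and> (j = 0 \<or> w!(j - 1) = D)
     \<and> (Suc j = length w \<or> w!Suc j = D)"

lemma hd_ribbon_comp_pos: "0 < hd (ribbon_comp w)"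
  by (induction w rule: ribbon_comp.induct) (auto simp: Let_def)

lemma isolated_ascent_Cons: "isolated_ascent w j \<Longrightarrow> 0 < j \<or> x = D \<Longrightarrow> isolated_ascent (x # w) (Suc j)"
  unfolding isolated_ascent_def by (cases j) auto

lemma ribbon_comp_two_imp_isolated_ascent:
  "(2 \<in> set (ribbon_comp w) \<longrightarrow> (\<exists>j. isolated_ascent w j))
   \<and> (2 \<in> set (tl (ribbon_comp w)) \<longrightarrow> (\<exists>j>0. isolated_ascent w j))"
proof (induction w)
  case (Cons x w)
  show ?case
  proof (cases x)
    case A
    have rc: "ribbon_comp (A # w) = Suc (hd (ribbon_comp w)) # tl (ribbon_comp w)"
      by (simp add: Let_def)
    have "\<exists>j. isolated_ascent (A # w) j" if "hd (ribbon_comp w) = 1"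
    proof -
      have "w = [] \<or> hd w = D"
      proof (cases w)
        case (Cons y ys)
        then show ?thesis
          using that hd_ribbon_comp_pos[of ys] by (cases y) (auto simp: Let_def)
      qed simp
      then have "isolated_ascent (A # w) 0"
        unfolding isolated_ascent_def by (cases w) auto
      then show ?thesis ..
    qed
    moreover have "\<exists>j>0. isolated_ascent (A # w) j" if "2 \<in> set (tl (ribbon_comp w))"
      using that Cons.IH isolated_ascent_Cons by blast
    ultimately show ?thesis
      using A rc by (auto simp: numeral_2_eq_2)
  next
    case D
    then show ?thesis
      using Cons.IH isolated_ascent_Cons[where x = D] by (auto simp: Let_def)
  qed
qed simp

lemma regular_ribbon_length: "regular_ribbon (ribbon_comp w) \<Longrightarrow> 2 \<le> length w"
proof (rule ccontr)
  assume "regular_ribbon (ribbon_comp w)" "\<not> 2 \<le> length w"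
  moreover have "w = [] \<or> w = [A] \<or> w = [D]" if "length w < 2"
    using that by (cases w rule: ribbon_comp.cases) auto
  ultimately show False
    by (auto simp: regular_ribbon_def nth_Cons split: nat.splits)
qed

lemma isolated_ascent_direction_change:
  assumes "isolated_ascent w j" and "2 \<le> length w"
  shows "\<exists>i. 0 < i \<and> i < length w \<and> w!(i - 1) \<noteq> w!i \<and> (even (length w) \<longrightarrow> odd i)"
proof -
  define i where "i = (if odd j \<or> Suc j = length w then j else Suc j)"
  show ?thesis
  proof (intro exI[of _ i] conjI impI)
    have "Suc j = length w \<Longrightarrow> 0 < j" "odd j \<Longrightarrow> 0 < j"
      using assms(2) by (auto simp: odd_pos)
    then show "0 < i" "i < length w" "w!(i - 1) \<noteq> w!i"
      using assms(1) unfolding isolated_ascent_def i_def by auto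
    show "odd i" if "even (length w)"
    proof -
      have "Suc j = length w \<Longrightarrow> odd j"
        using that by (metis even_Suc)
      then show ?thesis
        unfolding i_def by auto
    qed
  qed
qed

lemma nth_ad_pattern: "Suc i < length \<sigma> \<Longrightarrow> ad_pattern \<sigma> ! i = (if \<sigma>!i < \<sigma>!Suc i then A else D)"
  unfolding ad_pattern_def by simp

lemma regular_ribbon_direction_change:
  assumes "regular_ribbon (ribbon_comp (ad_pattern \<sigma>))"
  shows "3 \<le> length \<sigma> \<and> (\<exists>i. 0 < i \<and> Suc i < length \<sigma> \<and> (\<sigma>!(i - 1) < \<sigma>!i) \<noteq> (\<sigma>!i < \<sigma>!Suc i)
           \<and> (odd (length \<sigma>) \<longrightarrow> odd i))"
proof -
  let ?w = "ad_pattern \<sigma>"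
  have len: "length ?w = length \<sigma> - 1"
    unfolding ad_pattern_def by simp
  have two: "2 \<le> length ?w"
    by (rule regular_ribbon_length[OF assms])
  have "2 \<in> set (ribbon_comp ?w)"
    using assms unfolding regular_ribbon_def by (metis Suc_lessD nth_mem)
  then obtain j where "isolated_ascent ?w j"
    using ribbon_comp_two_imp_isolated_ascent by blast
  then obtain i where i: "0 < i" "i < length ?w" "?w!(i - 1) \<noteq> ?w!i" "even (length ?w) \<longrightarrow> odd i"
    using isolated_ascent_direction_change two by blast
  have "?w!(i - 1) = (if \<sigma>!(i - 1) < \<sigma>!i then A else D)" "?w!i = (if \<sigma>!i < \<sigma>!Suc i then A else D)"
    using i(1,2) len nth_ad_pattern[of "i - 1" \<sigma>] nth_ad_pattern[of i \<sigma>] by auto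
  then have "(\<sigma>!(i - 1) < \<sigma>!i) \<noteq> (\<sigma>!i < \<sigma>!Suc i)"
    using i(3) by (auto split: if_splits)
  moreover have "odd (length \<sigma>) \<longrightarrow> odd i"
    using i(4) two len by auto
  ultimately show ?thesis
    using i(1,2) two len by auto
qed

section \<open>Agreement with the up/down word\<close>

definition agreements :: "nat \<Rightarrow> (nat \<Rightarrow> bool) \<Rightarrow> (nat \<Rightarrow> bool) \<Rightarrow> nat" where
  "agreements n u d = card {i. Suc i < n \<and> d i = u i}"

lemma agreements_cong:
  "(\<And>i. Suc i < n \<Longrightarrow> d i = d' i) \<Longrightarrow> agreements n u d = agreements n u d'"
  unfolding agreements_def by (metis (mono_tags, lifting))

lemma agreements_add_compl: "agreements n u d + agreements n u (\<lambda>i. \<not> d i) = n - 1"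
proof -
  let ?S = "{i. Suc i < n \<and> d i = u i}" and ?S' = "{i. Suc i < n \<and> (\<not> d i) = u i}"
  have "?S \<union> ?S' = {..<n - 1}" "?S \<inter> ?S' = {}"
    by auto
  then have "card ?S + card ?S' = card {..<n - 1}"
    by (metis card_Un_disjoint finite_Un finite_lessThan)
  then show ?thesis
    unfolding agreements_def by simp
qed

lemma agreements_flip_adjacent:
  assumes "Suc (Suc j) < n" and "(d j = u j) = (d (Suc j) = u (Suc j))"
  defines "d' \<equiv> \<lambda>i. d i \<noteq> (i = j \<or> i = Suc j)"
  shows "agreements n u d' + 2 = agreements n u d \<or> agreements n u d + 2 = agreements n u d'"
proof -
  let ?S = "{i. Suc i < n \<and> d i = u i}" and ?S' = "{i. Suc i < n \<and> d' i = u i}"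
  have fin: "finite ?S" "finite ?S'"
    by (auto intro: finite_subset[of _ "{..<n}"])
  have card_pair: "card {j, Suc j} = 2"
    by simp
  show ?thesis
  proof (cases "d j = u j")
    case True
    then have "?S = ?S' \<union> {j, Suc j}" "?S' \<inter> {j, Suc j} = {}"
      using assms by auto
    then have "card ?S = card ?S' + 2"
      using fin card_pair by (simp add: card_Un_disjoint)
    then show ?thesis
      unfolding agreements_def by simp
  next
    case False
    then have "?S' = ?S \<union> {j, Suc j}" "?S \<inter> {j, Suc j} = {}"
      using assms by auto
    then have "card ?S' = card ?S + 2"
      using fin card_pair by (simp add: card_Un_disjoint)
    then show ?thesis
      unfolding agreements_def by simp
  qed
qed

lemma agreements_alternating:
  fixes f :: "nat \<Rightarrow> nat"
  assumes pos: "\<And>i. i < n \<Longrightarrow> 1 \<le> f i"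
    and proper: "\<And>i. Suc i < n \<Longrightarrow> f i \<noteq> f (Suc i)"
    and ones: "\<And>i. i < n \<Longrightarrow> f i = 1 \<longleftrightarrow> P i"
    and alternating: "\<And>i. P (Suc i) \<longleftrightarrow> \<not> P i"
  shows "agreements n u (\<lambda>i. f i < f (Suc i)) = agreements n u P"
proof (rule agreements_cong)
  fix i assume i: "Suc i < n"
  show "f i < f (Suc i) \<longleftrightarrow> P i"
    using pos[of i] pos[of "Suc i"] proper[OF i] ones[of i] ones[of "Suc i"] alternating[of i] i
    by (cases "P i") auto
qed

section \<open>Colorings read along the path\<close>

lemma bij_betw_restrict_comp_extensional:
  assumes "bij_betw g X Y"
  shows "bij_betw (\<lambda>c. restrict (c \<circ> g) X) (extensional Y) (extensional X)"
proof (rule bij_betw_byWitness[where f' = "\<lambda>f. restrict (f \<circ> inv_into X g) Y"])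
  have g: "g x \<in> Y" "inv_into X g (g x) = x" if "x \<in> X" for x
    using assms that by (auto simp: bij_betw_def)
  have inv: "inv_into X g y \<in> X" "g (inv_into X g y) = y" if "y \<in> Y" for y
    using assms that by (auto simp: bij_betw_def inv_into_into f_inv_into_f)
  show "\<forall>c\<in>extensional Y. restrict (restrict (c \<circ> g) X \<circ> inv_into X g) Y = c"
    using inv by (auto intro!: extensionalityI[where A = Y])
  show "\<forall>f\<in>extensional X. restrict (restrict (f \<circ> inv_into X g) Y \<circ> g) X = f"
    using g by (auto intro!: extensionalityI[where A = X])
qed auto

lemma card_extensional_reindex:
  assumes "bij_betw g X Y"
  shows "card {c \<in> extensional Y. P (restrict (c \<circ> g) X)} = card {f \<in> extensional X. P f}"
proof -
  let ?\<Phi> = "\<lambda>c. restrict (c \<circ> g) X"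
  have bij: "bij_betw ?\<Phi> (extensional Y) (extensional X)"
    by (rule bij_betw_restrict_comp_extensional[OF assms])
  have "bij_betw ?\<Phi> {c \<in> extensional Y. P (?\<Phi> c)} {f \<in> extensional X. P f}"
    by (rule bij_betw_subset[OF bij]) (use bij_betw_imp_surj_on[OF bij] in auto)
  then show ?thesis
    by (rule bij_betw_same_card)
qed

text \<open>\<open>f i\<close> is the color at the \<open>i\<close>-th vertex along the path and \<open>u i\<close> says whether the labels
  ascend at step \<open>i\<close>; \<open>a\<close> is the exponent vector, as in \<open>cqf_coeff\<close>.\<close>
definition path_colorings :: "nat \<Rightarrow> (nat \<Rightarrow> bool) \<Rightarrow> nat \<Rightarrow> (nat \<Rightarrow> nat) \<Rightarrow> (nat \<Rightarrow> nat) set" where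
  "path_colorings n u k a = {f \<in> extensional {..<n}. (\<forall>i<n. 1 \<le> f i) \<and> (\<forall>i. Suc i < n \<longrightarrow> f i \<noteq> f (Suc i))
      \<and> agreements n u (\<lambda>i. f i < f (Suc i)) = k \<and> (\<forall>j. card {i. i < n \<and> f i = j} = a j)}"

lemma labeled_path_nth_bij:
  "is_labeled_path \<sigma> \<Longrightarrow> bij_betw (nth \<sigma>) {..<length \<sigma>} {1..length \<sigma>}"
  unfolding is_labeled_path_def by (metis bij_betw_nth lessThan_atLeast0 atLeast_upt set_upt)

lemma proper_coloring_iff_adjacent:
  assumes "is_labeled_path \<sigma>"
  shows "proper_coloring \<sigma> c \<longleftrightarrow> (\<forall>i. Suc i < length \<sigma> \<longrightarrow> c (\<sigma>!i) \<noteq> c (\<sigma>!Suc i))"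
  unfolding proper_coloring_def path_edges_def by (auto simp: min_def max_def split: if_splits) metis+

lemma labeled_path_edge_inj:
  assumes "is_labeled_path \<sigma>"
  shows "inj_on (\<lambda>i. (min (\<sigma>!i) (\<sigma>!Suc i), max (\<sigma>!i) (\<sigma>!Suc i))) {i. Suc i < length \<sigma>}"
proof (rule inj_onI)
  have inj_nth: "inj_on (nth \<sigma>) {..<length \<sigma>}"
    using bij_betw_imp_inj_on[OF labeled_path_nth_bij[OF assms]] .
  fix i j assume i: "i \<in> {i. Suc i < length \<sigma>}" and j: "j \<in> {i. Suc i < length \<sigma>}"
    and "(min (\<sigma>!i) (\<sigma>!Suc i), max (\<sigma>!i) (\<sigma>!Suc i)) = (min (\<sigma>!j) (\<sigma>!Suc j), max (\<sigma>!j) (\<sigma>!Suc j))"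
  then have "(\<sigma>!i = \<sigma>!j \<and> \<sigma>!Suc i = \<sigma>!Suc j) \<or> (\<sigma>!i = \<sigma>!Suc j \<and> \<sigma>!Suc i = \<sigma>!j)"
    by (auto simp: min_def max_def split: if_splits)
  then show "i = j"
    using i j inj_onD[OF inj_nth, of i j] inj_onD[OF inj_nth, of i "Suc j"] inj_onD[OF inj_nth, of "Suc i" j]
    by auto
qed

lemma asc_eq_agreements:
  assumes lp: "is_labeled_path \<sigma>" and proper: "proper_coloring \<sigma> c"
  shows "asc \<sigma> c = agreements (length \<sigma>) (\<lambda>i. \<sigma>!i < \<sigma>!Suc i) (\<lambda>i. c (\<sigma>!i) < c (\<sigma>!Suc i))"
proof -
  let ?e = "\<lambda>i. (min (\<sigma>!i) (\<sigma>!Suc i), max (\<sigma>!i) (\<sigma>!Suc i))"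
  let ?E = "{i. Suc i < length \<sigma>}"
  have inj_nth: "inj_on (nth \<sigma>) {..<length \<sigma>}"
    using bij_betw_imp_inj_on[OF labeled_path_nth_bij[OF lp]] .
  have key: "(c (fst (?e i)) < c (snd (?e i))) = ((c (\<sigma>!i) < c (\<sigma>!Suc i)) = (\<sigma>!i < \<sigma>!Suc i))"
    if "i \<in> ?E" for i
  proof -
    have "\<sigma>!i \<noteq> \<sigma>!Suc i" "c (\<sigma>!i) \<noteq> c (\<sigma>!Suc i)"
      using that inj_onD[OF inj_nth, of i "Suc i"] proper unfolding proper_coloring_iff_adjacent[OF lp]
      by auto
    then show ?thesis
      by (auto simp: min_def max_def)
  qed
  let ?A = "{i \<in> ?E. (c (\<sigma>!i) < c (\<sigma>!Suc i)) = (\<sigma>!i < \<sigma>!Suc i)}"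
  have "path_edges \<sigma> = ?e ` ?E"
    unfolding path_edges_def by auto
  then have "{(v, w) \<in> path_edges \<sigma>. c v < c w} = ?e ` {i \<in> ?E. c (fst (?e i)) < c (snd (?e i))}"
    by auto
  also have "\<dots> = ?e ` ?A"
    using key by (intro arg_cong[where f = "image ?e"] Collect_cong) blast
  finally have "asc \<sigma> c = card (?e ` ?A)"
    unfolding asc_def by simp
  also have "\<dots> = card ?A"
    by (rule card_image[OF inj_on_subset[OF labeled_path_edge_inj[OF lp]]]) blast
  finally show ?thesis
    unfolding agreements_def by (simp add: conj_commute)
qed

lemma card_color_class_reindex:
  assumes "is_labeled_path \<sigma>"
  shows "card {v \<in> {1..length \<sigma>}. c v = j} = card {i. i < length \<sigma> \<and> c (\<sigma>!i) = j}"
proof -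
  have bij: "bij_betw (nth \<sigma>) {..<length \<sigma>} {1..length \<sigma>}"
    by (rule labeled_path_nth_bij[OF assms])
  have "{v \<in> {1..length \<sigma>}. c v = j} = nth \<sigma> ` {i. i < length \<sigma> \<and> c (\<sigma>!i) = j}"
    using bij unfolding bij_betw_def by auto
  moreover have "inj_on (nth \<sigma>) {i. i < length \<sigma> \<and> c (\<sigma>!i) = j}"
    by (rule inj_on_subset[OF bij_betw_imp_inj_on[OF bij]]) auto
  ultimately show ?thesis
    by (simp add: card_image)
qed

lemma cqf_coeff_eq_card_path_colorings:
  assumes lp: "is_labeled_path \<sigma>"
  shows "cqf_coeff \<sigma> k a = card (path_colorings (length \<sigma>) (\<lambda>i. \<sigma>!i < \<sigma>!Suc i) k a)"
proof -
  let ?n = "length \<sigma>" and ?u = "\<lambda>i. \<sigma>!i < \<sigma>!Suc i"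
  let ?\<Phi> = "\<lambda>c. restrict (c \<circ> nth \<sigma>) {..<?n}"
  let ?T = "path_colorings ?n ?u k a"
  have bij: "bij_betw (nth \<sigma>) {..<?n} {1..?n}"
    by (rule labeled_path_nth_bij[OF lp])
  have "{1..?n} = nth \<sigma> ` {..<?n}"
    using bij by (simp add: bij_betw_def)
  then have labels: "v \<in> {1..?n} \<longleftrightarrow> (\<exists>i<?n. v = \<sigma>!i)" for v
    by blast
  have "c \<in> {1..?n} \<rightarrow>\<^sub>E {1..} \<and> proper_coloring \<sigma> c \<and> asc \<sigma> c = k
          \<and> (\<forall>j. card {v \<in> {1..?n}. c v = j} = a j)
        \<longleftrightarrow> c \<in> extensional {1..?n} \<and> ?\<Phi> c \<in> ?T" for c
  proof -
    have "c \<in> {1..?n} \<rightarrow>\<^sub>E {1..} \<longleftrightarrow> c \<in> extensional {1..?n} \<and> (\<forall>i<?n. 1 \<le> ?\<Phi> c i)"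
      using labels by (auto simp: PiE_def Pi_def)
    moreover have "proper_coloring \<sigma> c \<longleftrightarrow> (\<forall>i. Suc i < ?n \<longrightarrow> ?\<Phi> c i \<noteq> ?\<Phi> c (Suc i))"
      by (simp add: proper_coloring_iff_adjacent[OF lp])
    moreover have "asc \<sigma> c = agreements ?n ?u (\<lambda>i. ?\<Phi> c i < ?\<Phi> c (Suc i))"
      if "proper_coloring \<sigma> c"
      using asc_eq_agreements[OF lp that] by (auto intro: agreements_cong)
    moreover have "card {v \<in> {1..?n}. c v = j} = card {i. i < ?n \<and> ?\<Phi> c i = j}" for j
      using card_color_class_reindex[OF lp, of c j] by (simp cong: conj_cong)
    ultimately show ?thesis
      unfolding path_colorings_def by auto
  qed
  then have "cqf_coeff \<sigma> k a = card {c \<in> extensional {1..?n}. ?\<Phi> c \<in> ?T}"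
    unfolding cqf_coeff_def by (intro arg_cong[where f = card] Collect_cong) simp
  also have "\<dots> = card {f \<in> extensional {..<?n}. f \<in> ?T}"
    by (rule card_extensional_reindex[OF bij])
  also have "{f \<in> extensional {..<?n}. f \<in> ?T} = ?T"
    unfolding path_colorings_def by blast
  finally show ?thesis .
qed

section \<open>Maximum independent sets of a path\<close>

definition path_independent :: "nat set \<Rightarrow> bool" where
  "path_independent I \<longleftrightarrow> (\<forall>i\<in>I. Suc i \<notin> I)"

definition stair :: "nat \<Rightarrow> nat \<Rightarrow> nat set" where
  "stair n t = {i. i < n \<and> (i < 2 * t \<longleftrightarrow> even i)}"

lemma path_independent_inj_half: "path_independent I \<Longrightarrow> inj_on (\<lambda>i. i div 2) I"
proof (rule inj_onI)
  fix x y assume "path_independent I" "x \<in> I" "y \<in> I" "x div 2 = y div 2"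
  moreover have "x = y \<or> x = Suc y \<or> y = Suc x"
    using \<open>x div 2 = y div 2\<close> by presburger
  ultimately show "x = y"
    unfolding path_independent_def by auto
qed

lemma path_independent_cover:
  assumes sub: "I \<subseteq> {..<n}" and indep: "path_independent I" and card: "card I = (n + 1) div 2"
    and k: "2 * k < n"
  shows "2 * k \<in> I \<or> Suc (2 * k) \<in> I"
proof -
  have "(\<lambda>i. i div 2) ` I \<subseteq> {..<(n + 1) div 2}"
    using sub by auto
  moreover have "card ((\<lambda>i. i div 2) ` I) = card {..<(n + 1) div 2}"
    using card_image[OF path_independent_inj_half[OF indep]] card by simp
  ultimately have "(\<lambda>i. i div 2) ` I = {..<(n + 1) div 2}"
    by (simp add: card_subset_eq)
  moreover have "k < (n + 1) div 2"
    using k by simp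
  ultimately obtain i where "i \<in> I" "i div 2 = k"
    by (metis imageE lessThan_iff)
  moreover from \<open>i div 2 = k\<close> have "i = 2 * k \<or> i = Suc (2 * k)"
    by presburger
  ultimately show ?thesis
    by auto
qed

lemma path_independent_covering_eq_stair:
  assumes sub: "I \<subseteq> {..<n}" and indep: "path_independent I"
    and cover: "\<And>k. 2 * k < n \<Longrightarrow> 2 * k \<in> I \<or> Suc (2 * k) \<in> I"
    and below: "\<And>k. k < t \<Longrightarrow> 2 * k \<in> I" and "2 * t \<notin> I"
  shows "I = stair n t"
proof -
  have above: "2 * k \<notin> I \<and> Suc (2 * k) \<in> I" if "t \<le> k" "2 * k < n" for k
    using that
  proof (induction k rule: dec_induct)
    case base
    then show ?case
      using \<open>2 * t \<notin> I\<close> cover by blast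
  next
    case (step k)
    then have "2 * Suc k \<notin> I"
      using indep unfolding path_independent_def by auto
    then show ?case
      using cover[of "Suc k"] step.prems by auto
  qed
  have "i \<in> I \<longleftrightarrow> (i < 2 * t \<longleftrightarrow> even i)" if "i < n" for i
  proof (cases "even i")
    case True
    then obtain k where "i = 2 * k" ..
    then show ?thesis
      using below[of k] above[of k] that by (cases "k < t") auto
  next
    case False
    then obtain k where "i = 2 * k + 1" ..
    then show ?thesis
      using below[of k] above[of k] indep that unfolding path_independent_def by (cases "k < t") auto
  qed
  then show ?thesis
    using sub unfolding stair_def by blast
qed

lemma path_independent_half_is_stair:
  assumes sub: "I \<subseteq> {..<n}" and indep: "path_independent I" and card: "card I = (n + 1) div 2"
  obtains t where "2 * t \<le> Suc n" "I = stair n t"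
proof -
  define t where "t = (LEAST k. 2 * k \<notin> I)"
  have "2 * n \<notin> I"
    using sub by auto
  then have "2 * t \<notin> I"
    unfolding t_def by (rule LeastI)
  moreover have below: "2 * k \<in> I" if "k < t" for k
    using that not_less_Least unfolding t_def by blast
  ultimately have "I = stair n t"
    using path_independent_covering_eq_stair[OF sub indep path_independent_cover[OF assms]] by blast
  moreover have "2 * t \<le> Suc n"
  proof (cases t)
    case (Suc t')
    then have "2 * t' < n"
      using below[of t'] sub by auto
    then show ?thesis
      using Suc by simp
  qed simp
  ultimately show thesis
    using that by blast
qed

lemma card_path_independent_covering:
  assumes sub: "S \<subseteq> {..<n}" and indep: "path_independent S"
    and cover: "\<And>k. 2 * k < n \<Longrightarrow> 2 * k \<in> S \<or> Suc (2 * k) \<in> S"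
  shows "card S = (n + 1) div 2"
proof -
  have "(\<lambda>i. i div 2) ` S = {..<(n + 1) div 2}"
  proof (intro equalityI subsetI)
    fix k assume "k \<in> {..<(n + 1) div 2}"
    then have "2 * k \<in> S \<or> Suc (2 * k) \<in> S"
      using cover by auto
    moreover have "2 * k div 2 = k" "Suc (2 * k) div 2 = k"
      by simp_all
    ultimately show "k \<in> (\<lambda>i. i div 2) ` S"
      by (metis image_eqI)
  qed (use sub in auto)
  then show ?thesis
    using card_image[OF path_independent_inj_half[OF indep]] by simp
qed

lemma stair_path_independent: "path_independent (stair n t)"
  unfolding path_independent_def stair_def by auto

lemma card_stair:
  assumes "t \<le> m"
  shows "card (stair (2 * m) t) = m"
proof -
  have "card (stair (2 * m) t) = (2 * m + 1) div 2"
    by (rule card_path_independent_covering[OF _ stair_path_independent])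
      (use assms in \<open>auto simp: stair_def\<close>)
  then show ?thesis
    by simp
qed

lemma card_evens_odd_length: "card {i. i < Suc (2 * l) \<and> even i} = Suc l"
proof -
  have "{i. i < Suc (2 * l) \<and> even i} = stair (Suc (2 * l)) (Suc l)"
    unfolding stair_def by auto
  also have "card \<dots> = (Suc (2 * l) + 1) div 2"
    by (rule card_path_independent_covering[OF _ stair_path_independent]) (auto simp: stair_def)
  finally show ?thesis
    by simp
qed

lemma stair_inj:
  assumes "2 * t \<le> n" "2 * t' \<le> n" "stair n t = stair n t'"
  shows "t = t'"
proof (rule ccontr)
  assume "t \<noteq> t'"
  then have "2 * min t t' \<in> stair n t \<longleftrightarrow> 2 * min t t' \<notin> stair n t'"
    using assms(1,2) unfolding stair_def by (auto simp: min_def)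
  then show False
    using assms(3) by simp
qed

definition exponent3 :: "nat \<Rightarrow> nat \<Rightarrow> nat \<Rightarrow> nat \<Rightarrow> nat" where
  "exponent3 x y z j = (if j = 1 then x else if j = 2 then y else if j = 3 then z else 0)"

lemma restrict_in_path_colorings:
  assumes "\<And>i. i < n \<Longrightarrow> 1 \<le> g i" and "\<And>i. Suc i < n \<Longrightarrow> g i \<noteq> g (Suc i)"
    and "agreements n u (\<lambda>i. g i < g (Suc i)) = k" and "\<And>j. card {i. i < n \<and> g i = j} = a j"
  shows "restrict g {..<n} \<in> path_colorings n u k a"
proof -
  have "agreements n u (\<lambda>i. restrict g {..<n} i < restrict g {..<n} (Suc i)) = k"
    using assms(3) by (subst agreements_cong[where d' = "\<lambda>i. g i < g (Suc i)"]) auto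
  moreover have "{i. i < n \<and> restrict g {..<n} i = j} = {i. i < n \<and> g i = j}" for j
    by auto
  ultimately show ?thesis
    using assms unfolding path_colorings_def by auto
qed

lemma color_counts_exponent3:
  fixes g :: "nat \<Rightarrow> nat"
  assumes vals: "\<And>i. i < n \<Longrightarrow> g i \<in> {1, 2, 3}"
    and "card {i. i < n \<and> g i = 1} = x" "card {i. i < n \<and> g i = 2} = y" and "x + y + z = n"
  shows "card {i. i < n \<and> g i = j} = exponent3 x y z j"
proof -
  let ?S = "\<lambda>j. {i. i < n \<and> g i = j}"
  have "{..<n} = (?S 1 \<union> ?S 2) \<union> ?S 3"
    using vals by blast
  then have "n = card ((?S 1 \<union> ?S 2) \<union> ?S 3)"
    by (metis card_lessThan)
  also have "\<dots> = card (?S 1 \<union> ?S 2) + card (?S 3)"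
    by (rule card_Un_disjoint) auto
  also have "card (?S 1 \<union> ?S 2) = card (?S 1) + card (?S 2)"
    by (rule card_Un_disjoint) auto
  finally have "n = card (?S 1) + card (?S 2) + card (?S 3)" .
  moreover have "?S j = {}" if "j \<notin> {1, 2, 3}"
    using vals that by fastforce
  ultimately show ?thesis
    using assms(2-4) unfolding exponent3_def by auto
qed

lemma path_colorings_exponent3_values:
  assumes "f \<in> path_colorings n u k (exponent3 x y z)" and "i < n"
  shows "f i \<in> {1, 2, 3}"
proof (rule ccontr)
  assume "f i \<notin> {1, 2, 3}"
  then have "card {i'. i' < n \<and> f i' = f i} = 0"
    using assms(1) unfolding path_colorings_def exponent3_def by auto
  then show False
    using assms(2) by (auto simp: card_eq_0_iff)
qed

lemma finite_path_colorings_exponent3: "finite (path_colorings n u k (exponent3 x y z))"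
proof (rule finite_subset)
  show "path_colorings n u k (exponent3 x y z) \<subseteq> {..<n} \<rightarrow>\<^sub>E {1, 2, 3}"
  proof
    fix f assume f: "f \<in> path_colorings n u k (exponent3 x y z)"
    then have "f \<in> extensional {..<n}"
      unfolding path_colorings_def by simp
    then show "f \<in> {..<n} \<rightarrow>\<^sub>E {1, 2, 3}"
      using path_colorings_exponent3_values[OF f] by (auto simp: PiE_def)
  qed
qed (simp add: finite_PiE)

lemma color_class_path_independent:
  "(\<And>i. Suc i < n \<Longrightarrow> f i \<noteq> f (Suc i)) \<Longrightarrow> path_independent {i. i < n \<and> f i = c}"
  unfolding path_independent_def by (metis (mono_tags, lifting) mem_Collect_eq)

lemma path_independent_odd_half:
  assumes sub: "I \<subseteq> {..<Suc (2 * l)}" and indep: "path_independent I" and card: "card I = Suc l"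
  shows "I = {i. i < Suc (2 * l) \<and> even i}"
proof -
  have card': "card I = (Suc (2 * l) + 1) div 2"
    using card by simp
  obtain t where t: "I = stair (Suc (2 * l)) t"
    using path_independent_half_is_stair[OF sub indep card'] by blast
  have "Suc (2 * l) \<notin> I"
    using sub by auto
  then have "2 * l \<in> I"
    using path_independent_cover[OF sub indep card', of l] by auto
  then have "2 * l < 2 * t"
    unfolding t stair_def by auto
  then show ?thesis
    unfolding t stair_def by auto
qed

section \<open>Paths of odd length\<close>

lemma agreements_odd_length_path_coloring:
  assumes f: "f \<in> path_colorings (Suc (2 * l)) u k (exponent3 (Suc l) y z)"
  shows "k = agreements (Suc (2 * l)) u (\<lambda>i. even i)"
proof -
  let ?n = "Suc (2 * l)"
  have pos: "\<And>i. i < ?n \<Longrightarrow> 1 \<le> f i" and proper: "\<And>i. Suc i < ?n \<Longrightarrow> f i \<noteq> f (Suc i)"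
    and asc: "agreements ?n u (\<lambda>i. f i < f (Suc i)) = k" and "card {i. i < ?n \<and> f i = 1} = Suc l"
    using f unfolding path_colorings_def exponent3_def by auto
  moreover have "path_independent {i. i < ?n \<and> f i = 1}"
    by (rule color_class_path_independent) (rule proper)
  ultimately have "{i. i < ?n \<and> f i = 1} = {i. i < ?n \<and> even i}"
    using path_independent_odd_half[of "{i. i < ?n \<and> f i = 1}" l] by auto
  then have "agreements ?n u (\<lambda>i. f i < f (Suc i)) = agreements ?n u (\<lambda>i. even i)"
    by (intro agreements_alternating[where f = f]) (use pos proper in \<open>auto simp: set_eq_iff\<close>)
  then show ?thesis
    using asc by simp
qed

definition spike :: "nat \<Rightarrow> nat \<Rightarrow> nat" where
  "spike q i = (if odd (i + q) then 2 else if i = q then 1 else 3)"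

lemma spike_rise: "spike q i < spike q (Suc i) \<longleftrightarrow> odd (i + q) \<noteq> (Suc i = q \<or> i = q)"
  unfolding spike_def by auto

lemma agreements_spike:
  assumes "0 < q" "Suc q < n" "u (q - 1) \<noteq> u q"
  shows "agreements n u (\<lambda>i. spike q i < spike q (Suc i)) + 2 = agreements n u (\<lambda>i. odd (i + q))
       \<or> agreements n u (\<lambda>i. odd (i + q)) + 2 = agreements n u (\<lambda>i. spike q i < spike q (Suc i))"
proof -
  have q: "Suc (q - 1) = q"
    using assms(1) by simp
  have "agreements n u (\<lambda>i. odd (i + q) \<noteq> (i = q - 1 \<or> i = Suc (q - 1))) + 2 = agreements n u (\<lambda>i. odd (i + q))
      \<or> agreements n u (\<lambda>i. odd (i + q)) + 2 = agreements n u (\<lambda>i. odd (i + q) \<noteq> (i = q - 1 \<or> i = Suc (q - 1)))"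
    by (rule agreements_flip_adjacent) (use assms q in \<open>auto simp: odd_pos\<close>)
  moreover have "(\<lambda>i. odd (i + q) \<noteq> (i = q - 1 \<or> i = Suc (q - 1))) = (\<lambda>i. spike q i < spike q (Suc i))"
    using q by (auto simp: spike_rise)
  ultimately show ?thesis
    by simp
qed

lemma odd_length_coefficients_differ:
  assumes n: "n = Suc (2 * l)" and q: "odd q" "Suc q < n" "u (q - 1) \<noteq> u q"
  shows "\<exists>k. card (path_colorings n u k (exponent3 1 (Suc l) (l - 1)))
           \<noteq> card (path_colorings n u k (exponent3 (Suc l) (l - 1) 1))"
proof -
  define k where "k = agreements n u (\<lambda>i. spike q i < spike q (Suc i))"
  have "(\<lambda>i. odd (i + q)) = (\<lambda>i. even i)"
    using q(1) by auto
  then have k: "k \<noteq> agreements n u (\<lambda>i. even i)"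
    using agreements_spike[of q n u] q odd_pos unfolding k_def by fastforce
  have "path_colorings n u k (exponent3 (Suc l) (l - 1) 1) = {}"
    using agreements_odd_length_path_coloring n k by blast
  moreover have "restrict (spike q) {..<n} \<in> path_colorings n u k (exponent3 1 (Suc l) (l - 1))"
  proof (rule restrict_in_path_colorings)
    have "{i. i < n \<and> spike q i = 1} = {q}"
      using q unfolding spike_def by auto
    moreover have "{i. i < n \<and> spike q i = 2} = {i. i < Suc (2 * l) \<and> even i}"
      using q(1) n unfolding spike_def by auto
    ultimately show "card {i. i < n \<and> spike q i = j} = exponent3 1 (Suc l) (l - 1) j" for j
      using q n card_evens_odd_length[of l]
      by (intro color_counts_exponent3) (auto simp: spike_def)
  qed (auto simp: spike_def k_def)
  ultimately show ?thesis
    using finite_path_colorings_exponent3 by (metis card_0_eq empty_iff)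
qed

section \<open>Paths of even length\<close>

definition ones_on_stair :: "nat \<Rightarrow> nat \<Rightarrow> nat \<Rightarrow> nat \<Rightarrow> nat" where
  "ones_on_stair m t q i = (if i \<in> stair (2 * m) t then 1 else if i = q then 3 else 2)"

definition twos_on_stair :: "nat \<Rightarrow> nat \<Rightarrow> nat \<Rightarrow> nat \<Rightarrow> nat" where
  "twos_on_stair m t q i = (if i \<in> stair (2 * m) t then 2 else if i = q then 1 else 3)"

definition admissible :: "nat \<Rightarrow> nat \<Rightarrow> nat \<Rightarrow> bool" where
  "admissible m t q \<longleftrightarrow> t \<le> m \<and> q < 2 * m \<and> q \<notin> stair (2 * m) t
     \<and> (0 < t \<and> t < m \<longrightarrow> q = 2 * t - 1 \<or> q = 2 * t)"

text \<open>\<open>twos_on_stair\<close> at \<open>twos_partner (t, q)\<close> has the same rises as \<open>ones_on_stair\<close> at \<open>(t, q)\<close>.\<close>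
definition twos_partner :: "nat \<times> nat \<Rightarrow> nat \<times> nat" where
  "twos_partner p = (case p of (t, q) \<Rightarrow> if odd q then (Suc t, q + 2) else (t - 1, q - 2))"

lemma twos_on_stair_in_path_colorings:
  assumes "admissible m t q"
  shows "restrict (twos_on_stair m t q) {..<2 * m}
    \<in> path_colorings (2 * m) u (agreements (2 * m) u (\<lambda>i. twos_on_stair m t q i < twos_on_stair m t q (Suc i)))
        (exponent3 1 m (m - 1))"
proof (rule restrict_in_path_colorings)
  show "twos_on_stair m t q i \<noteq> twos_on_stair m t q (Suc i)" if "Suc i < 2 * m" for i
    using assms that unfolding twos_on_stair_def admissible_def stair_def by auto
  have "{i. i < 2 * m \<and> twos_on_stair m t q i = 1} = {q}"
    using assms unfolding twos_on_stair_def admissible_def by auto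
  moreover have "{i. i < 2 * m \<and> twos_on_stair m t q i = 2} = stair (2 * m) t"
    unfolding twos_on_stair_def stair_def by auto
  ultimately show "card {i. i < 2 * m \<and> twos_on_stair m t q i = j} = exponent3 1 m (m - 1) j" for j
    using assms card_stair[of t m] unfolding admissible_def
    by (intro color_counts_exponent3) (auto simp: twos_on_stair_def)
qed (auto simp: twos_on_stair_def)

lemma rise_ones_on_stair_twos_partner:
  assumes "0 < t" "t < m" "Suc i < 2 * m"
  shows "(ones_on_stair m t (2 * t - 1) i < ones_on_stair m t (2 * t - 1) (Suc i))
           = (twos_on_stair m (Suc t) (2 * t + 1) i < twos_on_stair m (Suc t) (2 * t + 1) (Suc i))"
    and "(ones_on_stair m t (2 * t) i < ones_on_stair m t (2 * t) (Suc i))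
           = (twos_on_stair m (t - 1) (2 * t - 2) i < twos_on_stair m (t - 1) (2 * t - 2) (Suc i))"
  using assms unfolding ones_on_stair_def twos_on_stair_def stair_def by (auto; presburger)+

lemma twos_partner_admissible_agreements:
  assumes "0 < t" "t < m" "q = 2 * t - 1 \<or> q = 2 * t" "twos_partner (t, q) = (t', q')"
  shows "admissible m t' q'"
    and "agreements (2 * m) u (\<lambda>i. twos_on_stair m t' q' i < twos_on_stair m t' q' (Suc i))
       = agreements (2 * m) u (\<lambda>i. ones_on_stair m t q i < ones_on_stair m t q (Suc i))"
proof -
  have "odd (2 * t - 1)" "even (2 * t)"
    using assms(1) by auto
  then have partner: "(t', q') = (if q = 2 * t - 1 then (Suc t, 2 * t + 1) else (t - 1, 2 * t - 2))"
    using assms(3,4) unfolding twos_partner_def by auto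
  then show "admissible m t' q'"
    using assms(1-3) unfolding admissible_def stair_def by (auto split: if_splits; presburger)
  show "agreements (2 * m) u (\<lambda>i. twos_on_stair m t' q' i < twos_on_stair m t' q' (Suc i))
      = agreements (2 * m) u (\<lambda>i. ones_on_stair m t q i < ones_on_stair m t q (Suc i))"
    using partner assms(3) rise_ones_on_stair_twos_partner[OF assms(1,2)]
    by (intro agreements_cong) (auto split: if_splits)
qed

lemma twos_partner_inj: "inj_on twos_partner {(t, q). 0 < t \<and> (q = 2 * t - 1 \<or> q = 2 * t)}"
  unfolding twos_partner_def by (rule inj_onI) (auto split: if_splits; presburger)

lemma twos_partner_ne_alternating:
  assumes "0 < t" "t < m" "q = 2 * t - 1 \<or> q = 2 * t" "0 < i0" "Suc i0 < 2 * m"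
  shows "twos_partner (t, q) \<noteq> (if even i0 then 0 else m, i0)"
  using assms unfolding twos_partner_def by (auto; presburger)

lemma twos_on_stair_inj:
  assumes "admissible m t q" "admissible m t' q'"
    and "\<And>i. i < 2 * m \<Longrightarrow> twos_on_stair m t q i = twos_on_stair m t' q' i"
  shows "t = t'" "q = q'"
proof -
  have same: "{i. i < 2 * m \<and> twos_on_stair m t q i = c} = {i. i < 2 * m \<and> twos_on_stair m t' q' i = c}" for c
    using assms(3) by auto
  have "{i. i < 2 * m \<and> twos_on_stair m t q i = 1} = {q}"
    "{i. i < 2 * m \<and> twos_on_stair m t' q' i = 1} = {q'}"
    using assms(1,2) unfolding twos_on_stair_def admissible_def by auto
  then show "q = q'"
    using same[of 1] by simp
  have "{i. i < 2 * m \<and> twos_on_stair m t q i = 2} = stair (2 * m) t"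
    "{i. i < 2 * m \<and> twos_on_stair m t' q' i = 2} = stair (2 * m) t'"
    unfolding twos_on_stair_def stair_def by auto
  then have "stair (2 * m) t = stair (2 * m) t'"
    using same[of 2] by simp
  moreover have "2 * t \<le> 2 * m" "2 * t' \<le> 2 * m"
    using assms(1,2) unfolding admissible_def by auto
  ultimately show "t = t'"
    using stair_inj by blast
qed

lemma twos_on_stair_alternating:
  assumes "i0 < 2 * m"
  shows "admissible m (if even i0 then 0 else m) i0"
    and "i < 2 * m \<Longrightarrow> twos_on_stair m (if even i0 then 0 else m) i0 i = spike i0 i"
  using assms unfolding admissible_def twos_on_stair_def spike_def stair_def by auto

lemma agreements_twos_alternating_ne:
  assumes "2 \<le> m" "0 < i0" "Suc i0 < 2 * m" "u (i0 - 1) \<noteq> u i0"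
  defines "k \<equiv> agreements (2 * m) u
    (\<lambda>i. twos_on_stair m (if even i0 then 0 else m) i0 i < twos_on_stair m (if even i0 then 0 else m) i0 (Suc i))"
  shows "k \<noteq> agreements (2 * m) u (\<lambda>i. even i)" and "k \<noteq> agreements (2 * m) u (\<lambda>i. odd i)"
proof -
  let ?K = "\<lambda>P. agreements (2 * m) u P"
  have "k = ?K (\<lambda>i. spike i0 i < spike i0 (Suc i))"
    unfolding k_def using twos_on_stair_alternating(2)[of i0 m] assms(3) by (intro agreements_cong) auto
  then have "k + 2 = ?K (\<lambda>i. odd (i + i0)) \<or> ?K (\<lambda>i. odd (i + i0)) + 2 = k"
    using agreements_spike[OF assms(2,3,4)] by simp
  moreover have "(\<lambda>i. odd (i + i0)) = (\<lambda>i. even i) \<or> (\<lambda>i. odd (i + i0)) = (\<lambda>i. odd i)"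
    by (cases "even i0") auto
  moreover have "?K (\<lambda>i. even i) + ?K (\<lambda>i. odd i) = 2 * m - 1"
    using agreements_add_compl[of "2 * m" u "\<lambda>i. even i"] by simp
  ultimately show "k \<noteq> ?K (\<lambda>i. even i)" "k \<noteq> ?K (\<lambda>i. odd i)"
    using assms(1) by (auto, presburger+)
qed

lemma path_coloring_eq_ones_on_stair:
  assumes f: "f \<in> path_colorings (2 * m) u k (exponent3 m (m - 1) 1)"
    and ones: "{i. i < 2 * m \<and> f i = 1} = stair (2 * m) t" and t: "0 < t" "t < m"
  obtains q where "q = 2 * t - 1 \<or> q = 2 * t" "f = restrict (ones_on_stair m t q) {..<2 * m}"
proof -
  have vals: "\<And>i. i < 2 * m \<Longrightarrow> f i \<in> {1, 2, 3}"
    using path_colorings_exponent3_values[OF f] .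
  have proper: "\<And>i. Suc i < 2 * m \<Longrightarrow> f i \<noteq> f (Suc i)" and ext: "f \<in> extensional {..<2 * m}"
    using f unfolding path_colorings_def by auto
  have "card {i. i < 2 * m \<and> f i = 3} = 1"
    using f unfolding path_colorings_def exponent3_def by auto
  then obtain q where q: "{i. i < 2 * m \<and> f i = 3} = {q}"
    by (rule card_1_singletonE)
  have one_iff: "f i = 1 \<longleftrightarrow> i \<in> stair (2 * m) t" and three_iff: "f i = 3 \<longleftrightarrow> i = q" if "i < 2 * m" for i
    using that ones q by blast+
  have gap: "2 * t - 1 \<notin> stair (2 * m) t" "2 * t \<notin> stair (2 * m) t" "Suc (2 * t - 1) = 2 * t" "2 * t < 2 * m"
    using t unfolding stair_def by auto
  then have "f (2 * t - 1) \<noteq> 1" "f (2 * t) \<noteq> 1" "f (2 * t - 1) \<noteq> f (2 * t)"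
    using one_iff proper[of "2 * t - 1"] by auto
  then have "f (2 * t - 1) = 3 \<or> f (2 * t) = 3"
    using vals[of "2 * t - 1"] vals[of "2 * t"] gap(4) by auto
  then have "q = 2 * t - 1 \<or> q = 2 * t"
    using three_iff gap(4) by auto
  moreover have "f = restrict (ones_on_stair m t q) {..<2 * m}"
  proof (rule extensionalityI[OF ext])
    fix i assume "i \<in> {..<2 * m}"
    then show "f i = restrict (ones_on_stair m t q) {..<2 * m} i"
      using vals[of i] one_iff[of i] three_iff[of i] unfolding ones_on_stair_def by auto
  qed simp
  ultimately show thesis
    using that by blast
qed

lemma path_coloring_nonalternating_eq_ones_on_stair:
  assumes f: "f \<in> path_colorings (2 * m) u k (exponent3 m (m - 1) 1)"
    and k: "k \<noteq> agreements (2 * m) u (\<lambda>i. even i)" "k \<noteq> agreements (2 * m) u (\<lambda>i. odd i)"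
  obtains t q where "0 < t" "t < m" "q = 2 * t - 1 \<or> q = 2 * t"
    "f = restrict (ones_on_stair m t q) {..<2 * m}"
proof -
  have pos: "\<And>i. i < 2 * m \<Longrightarrow> 1 \<le> f i" and proper: "\<And>i. Suc i < 2 * m \<Longrightarrow> f i \<noteq> f (Suc i)"
    and asc: "agreements (2 * m) u (\<lambda>i. f i < f (Suc i)) = k"
    and card: "card {i. i < 2 * m \<and> f i = 1} = (2 * m + 1) div 2"
    using f unfolding path_colorings_def exponent3_def by auto
  have "path_independent {i. i < 2 * m \<and> f i = 1}"
    by (rule color_class_path_independent) (rule proper)
  then obtain t where t: "2 * t \<le> Suc (2 * m)" and ones: "{i. i < 2 * m \<and> f i = 1} = stair (2 * m) t"
    using path_independent_half_is_stair[OF _ _ card] by blast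
  have ones_iff: "f i = 1 \<longleftrightarrow> i \<in> stair (2 * m) t" if "i < 2 * m" for i
    using that ones by blast
  have "t \<noteq> 0"
  proof
    assume "t = 0"
    then have "agreements (2 * m) u (\<lambda>i. f i < f (Suc i)) = agreements (2 * m) u (\<lambda>i. odd i)"
      using ones_iff pos proper by (intro agreements_alternating[where f = f]) (auto simp: stair_def)
    then show False
      using asc k by simp
  qed
  moreover have "t \<noteq> m"
  proof
    assume "t = m"
    then have "agreements (2 * m) u (\<lambda>i. f i < f (Suc i)) = agreements (2 * m) u (\<lambda>i. even i)"
      using ones_iff pos proper by (intro agreements_alternating[where f = f]) (auto simp: stair_def)
    then show False
      using asc k by simp
  qed
  ultimately have "0 < t" "t < m"
    using t by auto
  then show thesis
    using that path_coloring_eq_ones_on_stair[OF f ones] by blast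
qed

definition stair_parameters :: "nat \<Rightarrow> (nat \<Rightarrow> bool) \<Rightarrow> nat \<Rightarrow> (nat \<times> nat) set" where
  "stair_parameters m u k = {(t, q). 0 < t \<and> t < m \<and> (q = 2 * t - 1 \<or> q = 2 * t)
     \<and> agreements (2 * m) u (\<lambda>i. ones_on_stair m t q i < ones_on_stair m t q (Suc i)) = k}"

lemma finite_stair_parameters: "finite (stair_parameters m u k)"
  by (rule finite_subset[of _ "{..<m} \<times> {..<2 * m}"]) (auto simp: stair_parameters_def)

lemma card_path_colorings_ones_le:
  assumes "k \<noteq> agreements (2 * m) u (\<lambda>i. even i)" "k \<noteq> agreements (2 * m) u (\<lambda>i. odd i)"
  shows "card (path_colorings (2 * m) u k (exponent3 m (m - 1) 1)) \<le> card (stair_parameters m u k)"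
proof -
  let ?ones = "\<lambda>(t, q). restrict (ones_on_stair m t q) {..<2 * m}"
  have "path_colorings (2 * m) u k (exponent3 m (m - 1) 1) \<subseteq> ?ones ` stair_parameters m u k"
  proof
    fix f assume f: "f \<in> path_colorings (2 * m) u k (exponent3 m (m - 1) 1)"
    then obtain t q where tq: "0 < t" "t < m" "q = 2 * t - 1 \<or> q = 2 * t"
      and f_eq: "f = restrict (ones_on_stair m t q) {..<2 * m}"
      using path_coloring_nonalternating_eq_ones_on_stair[OF _ assms] by blast
    have "agreements (2 * m) u (\<lambda>i. f i < f (Suc i)) = k"
      using f unfolding path_colorings_def by simp
    moreover have "agreements (2 * m) u (\<lambda>i. f i < f (Suc i))
        = agreements (2 * m) u (\<lambda>i. ones_on_stair m t q i < ones_on_stair m t q (Suc i))"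
      unfolding f_eq by (rule agreements_cong) simp
    ultimately have "(t, q) \<in> stair_parameters m u k"
      using tq unfolding stair_parameters_def by simp
    then show "f \<in> ?ones ` stair_parameters m u k"
      using f_eq by (auto intro: image_eqI[where x = "(t, q)"])
  qed
  then show ?thesis
    using finite_stair_parameters by (meson card_image_le card_mono finite_imageI le_trans)
qed

lemma card_admissible_le_path_colorings:
  assumes "\<And>t q. (t, q) \<in> P \<Longrightarrow> admissible m t q
    \<and> agreements (2 * m) u (\<lambda>i. twos_on_stair m t q i < twos_on_stair m t q (Suc i)) = k"
  shows "card P \<le> card (path_colorings (2 * m) u k (exponent3 1 m (m - 1)))"
proof -
  let ?twos = "\<lambda>(t, q). restrict (twos_on_stair m t q) {..<2 * m}"
  have "card P = card (?twos ` P)"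
  proof (rule card_image[symmetric], rule inj_onI, clarify)
    fix t q t' q' assume "(t, q) \<in> P" "(t', q') \<in> P"
      and eq: "restrict (twos_on_stair m t q) {..<2 * m} = restrict (twos_on_stair m t' q') {..<2 * m}"
    moreover have "twos_on_stair m t q i = twos_on_stair m t' q' i" if "i < 2 * m" for i
      using fun_cong[OF eq, of i] that by simp
    ultimately show "t = t' \<and> q = q'"
      using twos_on_stair_inj[of m t q t' q'] assms by blast
  qed
  also have "\<dots> \<le> card (path_colorings (2 * m) u k (exponent3 1 m (m - 1)))"
  proof (rule card_mono[OF finite_path_colorings_exponent3], clarify)
    fix t q assume "(t, q) \<in> P"
    then show "restrict (twos_on_stair m t q) {..<2 * m} \<in> path_colorings (2 * m) u k (exponent3 1 m (m - 1))"
      using twos_on_stair_in_path_colorings[of m t q u] assms[of t q] by simp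
  qed
  finally show ?thesis .
qed

lemma card_twos_partner_insert_alternating:
  assumes "0 < i0" "Suc i0 < 2 * m"
  shows "card (insert (if even i0 then 0 else m, i0) (twos_partner ` stair_parameters m u k))
    = Suc (card (stair_parameters m u k))"
proof -
  have "inj_on twos_partner (stair_parameters m u k)"
    by (rule inj_on_subset[OF twos_partner_inj]) (auto simp: stair_parameters_def)
  moreover have "(if even i0 then 0 else m, i0) \<notin> twos_partner ` stair_parameters m u k"
  proof
    assume "(if even i0 then 0 else m, i0) \<in> twos_partner ` stair_parameters m u k"
    then obtain t q where "(t, q) \<in> stair_parameters m u k" "twos_partner (t, q) = (if even i0 then 0 else m, i0)"
      by auto
    then show False
      using twos_partner_ne_alternating[of t m q i0] assms unfolding stair_parameters_def by auto
  qed
  ultimately show ?thesis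
    using finite_stair_parameters by (simp add: card_image)
qed

lemma even_length_coefficients_differ:
  assumes "2 \<le> m" and i0: "0 < i0" "Suc i0 < 2 * m" "u (i0 - 1) \<noteq> u i0"
  shows "\<exists>k. card (path_colorings (2 * m) u k (exponent3 1 m (m - 1)))
           \<noteq> card (path_colorings (2 * m) u k (exponent3 m (m - 1) 1))"
proof -
  define t0 where "t0 = (if even i0 then 0 else m)"
  define k where "k = agreements (2 * m) u (\<lambda>i. twos_on_stair m t0 i0 i < twos_on_stair m t0 i0 (Suc i))"
  define P where "P = insert (t0, i0) (twos_partner ` stair_parameters m u k)"
  have "card (path_colorings (2 * m) u k (exponent3 m (m - 1) 1)) \<le> card (stair_parameters m u k)"
    using agreements_twos_alternating_ne[OF assms] unfolding k_def t0_def
    by (intro card_path_colorings_ones_le) simp_all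
  also have "\<dots> < card P"
    using card_twos_partner_insert_alternating[OF i0(1,2)] unfolding P_def t0_def by simp
  also have "\<dots> \<le> card (path_colorings (2 * m) u k (exponent3 1 m (m - 1)))"
  proof (rule card_admissible_le_path_colorings)
    fix t q assume tq: "(t, q) \<in> P"
    show "admissible m t q
      \<and> agreements (2 * m) u (\<lambda>i. twos_on_stair m t q i < twos_on_stair m t q (Suc i)) = k"
    proof (cases "(t, q) = (t0, i0)")
      case True
      then show ?thesis
        using twos_on_stair_alternating(1)[of i0 m] i0(2) unfolding k_def t0_def by simp
    next
      case False
      then obtain t' q' where "(t', q') \<in> stair_parameters m u k" "twos_partner (t', q') = (t, q)"
        using tq unfolding P_def by auto
      then show ?thesis
        using twos_partner_admissible_agreements(1)[of t' m q' t q] twos_partner_admissible_agreements(2)[of t' m q' t q u]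
        unfolding stair_parameters_def by auto
    qed
  qed
  finally show ?thesis
    by (metis nat_neq_iff)
qed

definition rotate3 :: "nat \<Rightarrow> nat" where
  "rotate3 j = (if j = 1 then 3 else if j = 2 then 1 else if j = 3 then 2 else j)"

lemma bij_rotate3: "bij rotate3"
  by (rule o_bij[where g = "rotate3 \<circ> rotate3"]) (auto simp: rotate3_def)

lemma exponent3_comp_rotate3: "exponent3 x y z \<circ> rotate3 = exponent3 z x y"
proof
  fix j show "(exponent3 x y z \<circ> rotate3) j = exponent3 z x y j"
    unfolding exponent3_def rotate3_def by simp
qed

theorem proposition4p7:
  fixes \<sigma> :: "nat list"
  assumes "is_labeled_path \<sigma>"
    and "\<not> sublist [D, D, A, A] (ad_pattern \<sigma>)"
    and "\<not> prefix [D, A, A] (ad_pattern \<sigma>)"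
    and "\<not> suffix [D, D, A] (ad_pattern \<sigma>)"
    and "regular_ribbon (ribbon_comp (ad_pattern \<sigma>))"
  shows "\<not> cqf_symmetric \<sigma>"
proof
  assume "cqf_symmetric \<sigma>"
  define n u where "n = length \<sigma>" and "u = (\<lambda>i. \<sigma>!i < \<sigma>!Suc i)"
  have swap: "card (path_colorings n u k (exponent3 1 x y)) = card (path_colorings n u k (exponent3 x y 1))"
    for k x y
  proof -
    have "cqf_coeff \<sigma> k (exponent3 x y 1 \<circ> rotate3) = cqf_coeff \<sigma> k (exponent3 x y 1)"
      using \<open>cqf_symmetric \<sigma>\<close> bij_rotate3 unfolding cqf_symmetric_def by (simp add: rotate3_def)
    then show ?thesis
      unfolding exponent3_comp_rotate3 cqf_coeff_eq_card_path_colorings[OF assms(1)] n_def u_def .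
  qed
  obtain i where "3 \<le> n" "0 < i" "Suc i < n" "u (i - 1) \<noteq> u i" "odd n \<longrightarrow> odd i"
    using regular_ribbon_direction_change[OF assms(5)] unfolding n_def u_def by auto
  then show False
    using swap odd_length_coefficients_differ[of n "n div 2" i u]
      even_length_coefficients_differ[of "n div 2" i u]
    by (cases "even n") (auto elim!: evenE oddE)
qed

end
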